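(* Five distinct points $q_1,\dots,q_5\in\widehat{\mathbb H}$ lie on a single 2-sphere or a 2-plane if and only if $Q(q_1,q_2,q_3,q_4)$ and $Q(q_1,q_2,q_3,q_5)$ commute with each other.
   Context: $\mathbb H$ denotes the quaternions (identified with $\mathbb R^4$), $\widehat{\mathbb H}=\mathbb H\cup\{\infty\}$. For four distinct points of $\widehat{\mathbb H}$ the cross-ratio is $Q(q_1,q_2,q_3,q_4)=(q_2-q_1)^{-1}(q_4-q_1)(q_4-q_3)^{-1}(q_2-q_3)\in\mathbb H$, defined by taking limits if some $q_n=\infty$. *)

theory Defs
  imports "HOL-Analysis.Analysis"
begin

text \<open>Quaternions are identified with real^4: component 1 is the real part,
components 2,3,4 are the i, j, k parts.  Points of the extended space
H-hat are values of type real^4 option, where None is the point at infinity.\<close>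

type_synonym quat = "real^4"

definition qmul :: "quat \<Rightarrow> quat \<Rightarrow> quat" where
  "qmul a b = vector
     [a$1*b$1 - a$2*b$2 - a$3*b$3 - a$4*b$4,
      a$1*b$2 + a$2*b$1 + a$3*b$4 - a$4*b$3,
      a$1*b$3 - a$2*b$4 + a$3*b$1 + a$4*b$2,
      a$1*b$4 + a$2*b$3 - a$3*b$2 + a$4*b$1]"

definition qcnj :: "quat \<Rightarrow> quat" where
  "qcnj a = vector [a$1, - a$2, - a$3, - a$4]"

definition qinv :: "quat \<Rightarrow> quat" where
  "qinv a = (1 / (norm a)^2) *\<^sub>R qcnj a"

definition cross_ratio :: "quat \<Rightarrow> quat \<Rightarrow> quat \<Rightarrow> quat \<Rightarrow> quat" where
  "cross_ratio q1 q2 q3 q4 =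
     qmul (qmul (qmul (qinv (q2 - q1)) (q4 - q1)) (qinv (q4 - q3))) (q2 - q3)"

text \<open>Extension to H-hat by limits (for distinct points at most one is infinite).
  For q2 = infinity the limit is taken along the positive real axis
  (the general limit only exists up to conjugation).\<close>
definition cross_ratio_ext ::
  "quat option \<Rightarrow> quat option \<Rightarrow> quat option \<Rightarrow> quat option \<Rightarrow> quat" where
  "cross_ratio_ext p1 p2 p3 p4 =
     (if p1 = None then qmul (qinv (the p4 - the p3)) (the p2 - the p3)
      else if p2 = None then qmul (the p4 - the p1) (qinv (the p4 - the p3))
      else if p3 = None then qmul (qinv (the p2 - the p1)) (the p4 - the p1)
      else if p4 = None then qmul (qinv (the p2 - the p1)) (the p2 - the p3)
      else cross_ratio (the p1) (the p2) (the p3) (the p4))"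

definition is_2plane :: "quat set \<Rightarrow> bool" where
  "is_2plane P \<longleftrightarrow> affine P \<and> aff_dim P = 2"

definition is_2sphere :: "quat set \<Rightarrow> bool" where
  "is_2sphere S \<longleftrightarrow> (\<exists>A c r. affine A \<and> aff_dim A = 3 \<and> c \<in> A \<and> r > 0 \<and>
                               S = A \<inter> sphere c r)"

definition on_2sphere_or_2plane :: "quat option set \<Rightarrow> bool" where
  "on_2sphere_or_2plane X \<longleftrightarrow>
     (\<exists>S. is_2sphere S \<and> (\<forall>p\<in>X. p \<noteq> None \<and> the p \<in> S)) \<or>
     (\<exists>P. is_2plane P \<and> (\<forall>p\<in>X. p = None \<or> the p \<in> P))"

end

theory Submission
  imports Defs
begin

text \<open>The algebraic core: for \<open>a \<noteq> 0\<close> the quaternions \<open>b\<inverse> a\<close> and \<open>c\<inverse> a\<close> commute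
  iff \<open>a, b, c\<close> are linearly dependent.  Indeed \<open>z \<mapsto> qcnj z \<cdot> a\<close> is a real-linear
  bijection taking \<open>a\<close> to a real number, and two quaternions commute iff their imaginary
  parts are parallel, i.e. iff they are linearly dependent together with \<open>1\<close>.
  If one of the five points is \<open>\<infinity>\<close>, inverting, conjugating and subtracting \<open>1\<close> bring the
  two cross-ratios into this shape, and linear dependence of the differences says that the
  four finite points are coplanar.  If all points are finite, inversion centred at \<open>q\<^sub>1\<close>
  makes both cross-ratios conjugate to cross-ratios with first point \<open>\<infinity>\<close>, and
  \<open>q\<^sub>1, \<dots>, q\<^sub>5\<close> lie on a 2-sphere or a 2-plane iff the images of \<open>q\<^sub>2, \<dots>, q\<^sub>5\<close>
  under that inversion lie on a 2-plane.\<close>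

lemma dim_insert_scaleR:
  fixes v :: "'a::euclidean_space"
  assumes "r \<noteq> 0"
  shows "dim (insert (r *\<^sub>R v) S) = dim (insert v S)"
proof -
  have "r *\<^sub>R v \<in> span S \<longleftrightarrow> v \<in> span S"
    using span_scale[of "r *\<^sub>R v" S "inverse r"] span_scale[of v S r] assms by auto
  then show ?thesis
    by (simp add: dim_insert)
qed

lemma dim_insert_uminus: "dim (insert (- v) S) = dim (insert (v :: 'a::euclidean_space) S)"
  using dim_insert_scaleR[of "-1" v S] by simp

lemma aff_dim_insert_eq_dim:
  fixes a :: "'a::euclidean_space"
  shows "aff_dim (insert a S) = int (dim ((\<lambda>x. x - a) ` S))"
proof -
  have "aff_dim (insert a S) = int (dim ((\<lambda>x. x - a) ` insert a S))"
    by (rule aff_dim_eq_dim_subtract) (simp add: hull_inc)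
  also have "(\<lambda>x. x - a) ` insert a S = insert 0 ((\<lambda>x. x - a) ` S)"
    by simp
  also have "dim \<dots> = dim ((\<lambda>x. x - a) ` S)"
    by (simp add: dim_insert span_zero)
  finally show ?thesis .
qed

lemma subspace_superset_of_dim:
  fixes S :: "'a::euclidean_space set"
  assumes "dim S \<le> n" "n \<le> DIM('a)"
  obtains T where "subspace T" "S \<subseteq> T" "dim T = n"
proof -
  obtain B where B: "B \<subseteq> S" "independent B" "S \<subseteq> span B" "card B = dim S"
    by (rule basis_exists)
  obtain C where C: "B \<subseteq> C" "independent C" "UNIV \<subseteq> span C"
    by (rule maximal_independent_subset_extend[OF subset_UNIV B(2)]) blast
  have "span C = UNIV"
    using C(3) by auto
  then have "card C = DIM('a)"
    using dim_span_eq_card_independent[OF C(2)] by simp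
  then obtain T where T: "B \<subseteq> T" "T \<subseteq> C" "card T = n"
    using exists_subset_between[of B n C] assms B(4) C(1) independent_bound[OF C(2)] by auto
  have "independent T"
    using C(2) T(2) independent_mono by blast
  then show ?thesis
    using B(3) span_mono[OF T(1)] T(3) by (intro that[of "span T"]) (auto simp: dim_eq_card_independent)
qed

lemma affine_superset_of_aff_dim:
  fixes S :: "'a::euclidean_space set"
  assumes "aff_dim S \<le> int n" "n \<le> DIM('a)"
  obtains T where "affine T" "S \<subseteq> T" "aff_dim T = int n"
proof (cases "S = {}")
  case True
  obtain T :: "'a set" where "subspace T" "dim T = n"
    by (rule subspace_superset_of_dim[of "{}" n, OF _ assms(2)]) simp_all
  then show ?thesis
    using True by (intro that[of T]) (auto simp: subspace_imp_affine aff_dim_subspace)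
next
  case False
  then obtain a where "a \<in> S"
    by blast
  then have "dim ((\<lambda>x. x - a) ` S) \<le> n"
    using aff_dim_eq_dim_subtract[of a S] assms(1) by (simp add: hull_inc)
  then obtain V where V: "subspace V" "(\<lambda>x. x - a) ` S \<subseteq> V" "dim V = n"
    using assms(2) by (rule subspace_superset_of_dim)
  show ?thesis
  proof (rule that[of "(+) a ` V"])
    show "affine ((+) a ` V)"
      using V(1) affine_translation subspace_imp_affine by blast
    show "S \<subseteq> (+) a ` V"
      using V(2) by (force intro: image_eqI[of _ _ "_ - a"])
    show "aff_dim ((+) a ` V) = int n"
      using V by (simp add: aff_dim_translation_eq aff_dim_subspace)
  qed
qed

lemma affine_foot_of_perpendicular:
  fixes P :: "'a::euclidean_space set"
  assumes "affine P" "P \<noteq> {}"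
  obtains z where "z \<in> P" "\<And>w. w \<in> P \<Longrightarrow> z \<bullet> w = z \<bullet> z"
proof -
  obtain w0 where "w0 \<in> P"
    using assms(2) by blast
  define V where "V = (\<lambda>x. x - w0) ` P"
  have "subspace V"
    unfolding V_def using assms(1) \<open>w0 \<in> P\<close> by (rule affine_diffs_subspace_subtract)
  then have span_V: "span V = V"
    by (simp add: span_eq_iff)
  obtain v z where vz: "v \<in> V" "\<And>u. u \<in> V \<Longrightarrow> orthogonal z u" "w0 = v + z"
    by (rule orthogonal_subspace_decomp_exists[of V w0]) (auto simp: span_V)
  have V_iff: "w \<in> P \<longleftrightarrow> w - w0 \<in> V" for w
    by (auto simp: V_def intro: image_eqI[of _ _ w])
  show ?thesis
  proof (rule that)
    show "z \<in> P"
      using vz(1,3) \<open>subspace V\<close> by (simp add: V_iff subspace_neg)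
    fix w
    assume "w \<in> P"
    then have "(w - w0) + v \<in> V"
      using vz(1) \<open>subspace V\<close> by (simp add: V_iff subspace_add)
    moreover have "w - z = (w - w0) + v"
      using vz(3) by (simp add: algebra_simps)
    ultimately have "w - z \<in> V"
      by metis
    then show "z \<bullet> w = z \<bullet> z"
      using vz(2)[of "w - z"] by (simp add: orthogonal_def inner_diff_right)
  qed
qed

section \<open>Inversion in the unit sphere\<close>

definition inversion :: "'a::real_normed_vector \<Rightarrow> 'a" where
  "inversion x = (1 / (norm x)^2) *\<^sub>R x"

lemma inversion_0 [simp]: "inversion 0 = 0"
  and inversion_eq_0_iff [simp]: "inversion x = 0 \<longleftrightarrow> x = 0"
  and inversion_inversion [simp]: "inversion (inversion x) = x"
  by (auto simp: inversion_def power2_eq_square)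

lemma span_inversion_image: "span (inversion ` S) = span S"
proof -
  have "inversion x \<in> span T" if "x \<in> span T" for x and T :: "'a set"
    using that by (simp add: inversion_def span_scale)
  then show ?thesis
    unfolding span_eq by (metis image_subset_iff inversion_inversion span_base imageI subsetI)
qed

lemma aff_dim_insert_0_inversion_image:
  fixes S :: "'a::euclidean_space set"
  shows "aff_dim (insert 0 (inversion ` S)) = aff_dim (insert 0 S)"
proof -
  have "aff_dim (insert 0 X) = int (dim X)" for X :: "'a set"
    using aff_dim_insert_eq_dim[of 0 X] by simp
  then show ?thesis
    using span_eq_dim[OF span_inversion_image[of S]] by simp
qed

text \<open>Inversion exchanges the sphere through \<open>0\<close> with centre \<open>c\<close> and the hyperplane
  \<open>c \<bullet> w = 1/2\<close>.\<close>
lemma inner_inversion_eq_half_iff: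
  fixes c x :: "'a::real_inner"
  assumes "x \<noteq> 0"
  shows "c \<bullet> inversion x = 1/2 \<longleftrightarrow> dist c x = norm c"
proof -
  have "dist c x = norm c \<longleftrightarrow> (norm (c - x))^2 = (norm c)^2"
    by (simp add: dist_norm power2_eq_iff_nonneg)
  also have "\<dots> \<longleftrightarrow> 2 * (c \<bullet> x) = (norm x)^2"
    by (auto simp: power2_norm_eq_inner inner_diff_left inner_diff_right inner_commute)
  finally show ?thesis
    using assms by (auto simp: inversion_def field_simps)
qed

section \<open>Quaternion arithmetic\<close>

lemma vector4_nth [simp]:
  "(vector [x, y, z, w] :: real^4) $ 1 = x"
  "(vector [x, y, z, w] :: real^4) $ 2 = y"
  "(vector [x, y, z, w] :: real^4) $ 3 = z"
  "(vector [x, y, z, w] :: real^4) $ 4 = w"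
  unfolding vector_def by simp_all

lemma quat_eq_iff: "(a :: quat) = b \<longleftrightarrow> a$1 = b$1 \<and> a$2 = b$2 \<and> a$3 = b$3 \<and> a$4 = b$4"
  by (simp add: vec_eq_iff forall_4)

definition qone :: quat where
  "qone = vector [1, 0, 0, 0]"

lemma qone_nth [simp]: "qone$1 = 1" "qone$2 = 0" "qone$3 = 0" "qone$4 = 0"
  by (simp_all add: qone_def)

lemma qone_neq_0 [simp]: "qone \<noteq> 0"
  by (simp add: quat_eq_iff)

lemma qmul_nth [simp]:
  "qmul a b $ 1 = a$1*b$1 - a$2*b$2 - a$3*b$3 - a$4*b$4"
  "qmul a b $ 2 = a$1*b$2 + a$2*b$1 + a$3*b$4 - a$4*b$3"
  "qmul a b $ 3 = a$1*b$3 - a$2*b$4 + a$3*b$1 + a$4*b$2"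
  "qmul a b $ 4 = a$1*b$4 + a$2*b$3 - a$3*b$2 + a$4*b$1"
  by (simp_all add: qmul_def)

lemma qcnj_nth [simp]: "qcnj a $ 1 = a$1" "qcnj a $ 2 = - a$2" "qcnj a $ 3 = - a$3" "qcnj a $ 4 = - a$4"
  by (simp_all add: qcnj_def)

lemma norm_quat_square: "(norm (a :: quat))^2 = a$1^2 + a$2^2 + a$3^2 + a$4^2"
  unfolding power2_norm_eq_inner inner_vec_def sum_4 by (simp add: power2_eq_square)

lemma qmul_assoc: "qmul (qmul a b) c = qmul a (qmul b c)"
  by (simp add: quat_eq_iff algebra_simps)

lemma qmul_add_left: "qmul (a + b) c = qmul a c + qmul b c"
  and qmul_diff_left: "qmul (a - b) c = qmul a c - qmul b c"
  and qmul_diff_right: "qmul c (a - b) = qmul c a - qmul c b"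
  and qmul_scaleR_left: "qmul (r *\<^sub>R a) c = r *\<^sub>R qmul a c"
  and qmul_scaleR_right: "qmul c (r *\<^sub>R a) = r *\<^sub>R qmul c a"
  by (simp_all add: quat_eq_iff algebra_simps)

lemma qmul_qone [simp]: "qmul qone a = a" "qmul a qone = a"
  and qmul_zero [simp]: "qmul 0 a = 0" "qmul a 0 = 0"
  by (simp_all add: quat_eq_iff)

lemma qcnj_qcnj [simp]: "qcnj (qcnj a) = a"
  and qcnj_eq_0_iff [simp]: "qcnj a = 0 \<longleftrightarrow> a = 0"
  and qcnj_eq_iff [simp]: "qcnj a = qcnj b \<longleftrightarrow> a = b"
  by (auto simp: quat_eq_iff)

lemma qcnj_diff: "qcnj (a - b) = qcnj a - qcnj b"
  and qcnj_scaleR: "qcnj (r *\<^sub>R a) = r *\<^sub>R qcnj a"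
  by (simp_all add: quat_eq_iff)

lemma linear_qcnj: "linear qcnj"
  by (rule linearI) (simp_all add: quat_eq_iff)

lemma qmul_qcnj_left: "qmul (qcnj a) a = (norm a)^2 *\<^sub>R qone"
  and qmul_qcnj_right: "qmul a (qcnj a) = (norm a)^2 *\<^sub>R qone"
  unfolding quat_eq_iff norm_quat_square by (simp_all add: algebra_simps power2_eq_square)

lemma qmul_qinv_left: "a \<noteq> 0 \<Longrightarrow> qmul (qinv a) a = qone"
  and qmul_qinv_right: "a \<noteq> 0 \<Longrightarrow> qmul a (qinv a) = qone"
  by (simp_all add: qinv_def qmul_scaleR_left qmul_scaleR_right qmul_qcnj_left qmul_qcnj_right)

lemma qinv_qmul_cancel_left: "a \<noteq> 0 \<Longrightarrow> qmul (qinv a) (qmul a z) = z"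
  and qmul_qinv_cancel_left: "a \<noteq> 0 \<Longrightarrow> qmul a (qmul (qinv a) z) = z"
  by (simp_all add: qmul_qinv_left qmul_qinv_right flip: qmul_assoc)

lemma qmul_eq_0_iff: "qmul a b = 0 \<longleftrightarrow> a = 0 \<or> b = 0"
  by (metis qinv_qmul_cancel_left qmul_zero)

lemma qinv_eq_0_iff [simp]: "qinv a = 0 \<longleftrightarrow> a = 0"
  and qinv_zero [simp]: "qinv 0 = 0"
  by (simp_all add: qinv_def)

lemma qmul_cancel_left: "g \<noteq> 0 \<Longrightarrow> qmul g a = qmul g b \<longleftrightarrow> a = b"
  by (metis qinv_qmul_cancel_left)

lemma qmul_cancel_right: "g \<noteq> 0 \<Longrightarrow> qmul a g = qmul b g \<longleftrightarrow> a = b"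
  by (metis qmul_assoc qmul_qinv_right qmul_qone(2))

lemma qinv_unique:
  assumes "qmul a b = qone"
  shows "qinv a = b"
proof -
  have "a \<noteq> 0"
    using assms by auto
  then have "qmul (qinv a) (qmul a b) = b"
    by (rule qinv_qmul_cancel_left)
  then show ?thesis
    using assms by simp
qed

lemma qinv_qinv [simp]: "qinv (qinv a) = a"
  using qinv_unique[OF qmul_qinv_left] by (cases "a = 0") auto

lemma qinv_qmul: "qinv (qmul a b) = qmul (qinv b) (qinv a)"
proof (cases "a = 0 \<or> b = 0")
  case False
  then show ?thesis
    by (intro qinv_unique) (simp add: qmul_assoc qmul_qinv_cancel_left qmul_qinv_right)
qed auto

lemma qinv_inj: "qinv a = qinv b \<longleftrightarrow> a = b"
  by (metis qinv_qinv)

lemma qinv_eq_qcnj_inversion: "qinv a = qcnj (inversion a)"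
  by (simp add: qinv_def inversion_def qcnj_scaleR)

lemma qmul_add_qinv_right: "a \<noteq> 0 \<Longrightarrow> qmul (a + b) (qinv a) = qone + qmul b (qinv a)"
  by (simp add: qmul_add_left qmul_qinv_right)

lemma qinv_diff_qinv:
  assumes "a \<noteq> 0" "b \<noteq> 0"
  shows "qinv a - qinv b = qmul (qinv a) (qmul (b - a) (qinv b))"
  using assms by (simp add: qmul_diff_left qmul_diff_right qinv_qmul_cancel_left qmul_qinv_right)

section \<open>Commuting quaternions\<close>

definition qcommute :: "quat \<Rightarrow> quat \<Rightarrow> bool" where
  "qcommute x y \<longleftrightarrow> qmul x y = qmul y x"

lemma qcommute_sym: "qcommute x y \<longleftrightarrow> qcommute y x"
  by (auto simp: qcommute_def)

lemma qcommute_iff_imag: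
  "qcommute x y \<longleftrightarrow> x$3*y$4 = x$4*y$3 \<and> x$4*y$2 = x$2*y$4 \<and> x$2*y$3 = x$3*y$2"
  by (simp add: qcommute_def quat_eq_iff algebra_simps)

lemma qcommute_scaleR_left: "r \<noteq> 0 \<Longrightarrow> qcommute (r *\<^sub>R x) y \<longleftrightarrow> qcommute x y"
  by (simp add: qcommute_iff_imag mult.assoc)

lemma qcommute_scaleR_right: "r \<noteq> 0 \<Longrightarrow> qcommute x (r *\<^sub>R y) \<longleftrightarrow> qcommute x y"
  by (metis qcommute_scaleR_left qcommute_sym)

lemma qcommute_qone_add: "qcommute (qone + x) (qone + y) \<longleftrightarrow> qcommute x y"
  by (simp add: qcommute_iff_imag)

lemma qcommute_qinv_left: "qcommute (qinv x) y \<longleftrightarrow> qcommute x y"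
proof (cases "x = 0")
  case False
  then have "qcommute (qinv x) y \<longleftrightarrow> qcommute (qcnj x) y"
    unfolding qinv_def by (intro qcommute_scaleR_left) simp
  then show ?thesis by (simp add: qcommute_iff_imag)
qed (simp add: qinv_def qcommute_def)

lemma qcommute_qinv: "qcommute (qinv x) (qinv y) \<longleftrightarrow> qcommute x y"
  by (metis qcommute_qinv_left qcommute_sym)

lemma qcommute_conj:
  assumes "g \<noteq> 0"
  shows "qcommute (qmul (qmul g x) (qinv g)) (qmul (qmul g y) (qinv g)) \<longleftrightarrow> qcommute x y"
proof -
  have "qmul (qmul (qmul g u) (qinv g)) (qmul (qmul g v) (qinv g)) = qmul (qmul g (qmul u v)) (qinv g)" for u v
    using assms by (simp add: qmul_assoc qinv_qmul_cancel_left)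
  then show ?thesis
    using assms by (simp add: qcommute_def qmul_cancel_left qmul_cancel_right)
qed

lemma qcommute_qmul_right: "a \<noteq> 0 \<Longrightarrow> qcommute a (qmul b a) \<longleftrightarrow> qcommute a b"
  unfolding qcommute_def by (metis qmul_assoc qmul_cancel_right)

lemma in_span_qone_iff: "x \<in> span {qone} \<longleftrightarrow> x$2 = 0 \<and> x$3 = 0 \<and> x$4 = 0"
  by (auto simp: span_singleton quat_eq_iff intro: range_eqI[of _ _ "x$1"])

lemma qcommute_imp_parallel:
  assumes "qcommute x y" "x \<notin> span {qone}"
  obtains t where "y - t *\<^sub>R x \<in> span {qone}"
proof -
  consider "x$2 \<noteq> 0" | "x$3 \<noteq> 0" | "x$4 \<noteq> 0"
    using assms(2) by (auto simp: in_span_qone_iff)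
  then show ?thesis
  proof cases
    case 1
    with assms(1) show ?thesis
      by (intro that[of "y$2 / x$2"]) (auto simp: qcommute_iff_imag in_span_qone_iff field_simps)
  next
    case 2
    with assms(1) show ?thesis
      by (intro that[of "y$3 / x$3"]) (auto simp: qcommute_iff_imag in_span_qone_iff field_simps)
  next
    case 3
    with assms(1) show ?thesis
      by (intro that[of "y$4 / x$4"]) (auto simp: qcommute_iff_imag in_span_qone_iff field_simps)
  qed
qed

lemma qcommute_iff_dim: "qcommute x y \<longleftrightarrow> dim {qone, x, y} \<le> 2"
proof (cases "x \<in> span {qone}")
  case True
  then have "qcommute x y"
    by (simp add: in_span_qone_iff qcommute_iff_imag)
  moreover have "dim {qone, x, y} \<le> 2"
  proof -
    have "x \<in> span {qone, y}"
      using True span_mono[of "{qone}" "{qone, y}"] by blast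
    then have "dim (insert x {qone, y}) = dim {qone, y}"
      by (simp only: dim_insert if_True)
    also have "\<dots> \<le> card {qone, y}"
      by (rule dim_le_card') simp
    also have "\<dots> \<le> 2"
      by (simp add: card_insert_if)
    finally show ?thesis
      by (simp add: insert_commute)
  qed
  ultimately show ?thesis by simp
next
  case False
  have dim2: "dim {qone, x} = 2"
    using False dim_insert[of x "{qone}"] by (simp add: dim_singleton insert_commute)
  have "qcommute x y \<longleftrightarrow> y \<in> span {qone, x}"
  proof
    assume "qcommute x y"
    then obtain t where "y - t *\<^sub>R x \<in> span {qone}"
      using False by (rule qcommute_imp_parallel)
    then show "y \<in> span {qone, x}"
      using span_breakdown_eq[of y x "{qone}"] by (metis insert_commute)
  next
    assume "y \<in> span {qone, x}"
    then obtain s t where "y = s *\<^sub>R qone + t *\<^sub>R x"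
      unfolding span_breakdown_eq[of y qone "{x}"] span_singleton by (auto simp: algebra_simps)
    then show "qcommute x y"
      by (simp add: qcommute_iff_imag algebra_simps)
  qed
  also have "\<dots> \<longleftrightarrow> dim (insert y {qone, x}) \<le> 2"
    unfolding dim_insert[of y "{qone, x}"] dim2 by simp
  also have "insert y {qone, x} = {qone, x, y}"
    by auto
  finally show ?thesis .
qed

lemma qcommute_ldiv_iff_dim:
  assumes "a \<noteq> 0" "b \<noteq> 0" "c \<noteq> 0"
  shows "qcommute (qmul (qinv b) a) (qmul (qinv c) a) \<longleftrightarrow> dim {a, b, c} \<le> 2"
proof -
  define L where "L z = qmul (qcnj z) a" for z
  have "linear L"
    unfolding L_def by (rule linearI) (simp_all add: quat_eq_iff algebra_simps)
  moreover have "inj L"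
    using assms(1) by (intro injI) (simp add: L_def qmul_cancel_right)
  moreover have L_a: "L a = (norm a)^2 *\<^sub>R qone"
    by (simp add: L_def qmul_qcnj_left)
  moreover have "qmul (qinv z) a = (1 / (norm z)^2) *\<^sub>R L z" for z
    by (simp add: L_def qinv_def qmul_scaleR_left)
  ultimately have "qcommute (qmul (qinv b) a) (qmul (qinv c) a) \<longleftrightarrow> qcommute (L b) (L c)"
    using assms by (simp add: qcommute_scaleR_left qcommute_scaleR_right)
  also have "\<dots> \<longleftrightarrow> dim {qone, L b, L c} \<le> 2"
    by (rule qcommute_iff_dim)
  also have "dim {qone, L b, L c} = dim (L ` {a, b, c})"
    using assms(1) by (simp add: L_a dim_insert_scaleR)
  also have "\<dots> = dim {a, b, c}"
    using \<open>linear L\<close> \<open>inj L\<close> by (intro dim_image_eq) (auto intro: inj_on_subset)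
  finally show ?thesis .
qed

lemma qcommute_rdiv_iff_dim:
  assumes "a \<noteq> 0" "b \<noteq> 0" "c \<noteq> 0"
  shows "qcommute (qmul a (qinv b)) (qmul a (qinv c)) \<longleftrightarrow> dim {a, b, c} \<le> 2"
proof -
  have "qmul (qmul (qinv a) (qmul a (qinv z))) (qinv (qinv a)) = qmul (qinv z) a" for z
    using assms(1) by (simp add: qinv_qmul_cancel_left)
  then have "qcommute (qmul a (qinv b)) (qmul a (qinv c)) \<longleftrightarrow> qcommute (qmul (qinv b) a) (qmul (qinv c) a)"
    using qcommute_conj[of "qinv a" "qmul a (qinv b)" "qmul a (qinv c)"] assms(1) by simp
  also have "\<dots> \<longleftrightarrow> dim {a, b, c} \<le> 2"
    using assms by (rule qcommute_ldiv_iff_dim)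
  finally show ?thesis .
qed

lemma cross_ratio_translate: "cross_ratio x1 x2 x3 x4 = cross_ratio 0 (x2 - x1) (x3 - x1) (x4 - x1)"
  by (simp add: cross_ratio_def)

text \<open>In the notation of the paper: \<open>Q(0, y\<^sub>2, y\<^sub>3, y\<^sub>4) = y\<^sub>2\<inverse> Q(\<infinity>, u\<^sub>2, u\<^sub>3, u\<^sub>4) y\<^sub>2\<close>
  with \<open>u\<^sub>i = y\<^sub>i\<inverse>\<close>.\<close>
lemma cross_ratio_0_eq_conj_qinv:
  assumes "distinct [0, y2, y3, y4]"
  shows "cross_ratio 0 y2 y3 y4 =
    qmul (qmul (qinv y2) (qmul (qinv (qinv y3 - qinv y4)) (qinv y3 - qinv y2))) y2"
proof -
  have nz: "y2 \<noteq> 0" "y3 \<noteq> 0" "y4 \<noteq> 0" "y4 - y3 \<noteq> 0"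
    using assms by auto
  have "qmul (qinv (qinv y3 - qinv y4)) (qinv y3 - qinv y2)
      = qmul (qmul y4 (qmul (qinv (y4 - y3)) y3)) (qmul (qinv y3) (qmul (y2 - y3) (qinv y2)))"
    using nz by (simp add: qinv_diff_qinv qinv_qmul qmul_assoc)
  also have "\<dots> = qmul y4 (qmul (qinv (y4 - y3)) (qmul (y2 - y3) (qinv y2)))"
    using nz by (simp add: qmul_assoc qmul_qinv_cancel_left)
  finally show ?thesis
    using nz by (simp add: cross_ratio_def qmul_assoc qinv_qmul_cancel_left qmul_qinv_left
        flip: qmul_assoc[of _ "qinv y2" y2])
qed

lemma qcommute_cross_ratio_second_infinite:
  assumes "distinct [x1, x3, x4, x5]"
  shows "qcommute (qmul (x4 - x1) (qinv (x4 - x3))) (qmul (x5 - x1) (qinv (x5 - x3)))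
    \<longleftrightarrow> dim {x3 - x1, x4 - x1, x5 - x1} \<le> 2"
proof -
  have flip: "qinv (qmul (x - x1) (qinv (x - x3))) = qone + qmul (x1 - x3) (qinv (x - x1))"
    if "x1 \<noteq> x" for x
    using qmul_add_qinv_right[of "x - x1" "x1 - x3"] that by (simp add: qinv_qmul)
  have "qcommute (qmul (x4 - x1) (qinv (x4 - x3))) (qmul (x5 - x1) (qinv (x5 - x3)))
    \<longleftrightarrow> qcommute (qinv (qmul (x4 - x1) (qinv (x4 - x3)))) (qinv (qmul (x5 - x1) (qinv (x5 - x3))))"
    by (simp only: qcommute_qinv)
  also have "\<dots> \<longleftrightarrow> qcommute (qmul (x1 - x3) (qinv (x4 - x1))) (qmul (x1 - x3) (qinv (x5 - x1)))"
    using assms flip[of x4] flip[of x5] qcommute_qone_add by simp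
  also have "\<dots> \<longleftrightarrow> dim {x1 - x3, x4 - x1, x5 - x1} \<le> 2"
    using assms by (intro qcommute_rdiv_iff_dim) auto
  also have "dim {x1 - x3, x4 - x1, x5 - x1} = dim {x3 - x1, x4 - x1, x5 - x1}"
    using dim_insert_uminus[of "x3 - x1"] by simp
  finally show ?thesis .
qed

lemma qcommute_cross_ratio_third_infinite:
  assumes "distinct [x1, x2, x4, x5]"
  shows "qcommute (qmul (qinv (x2 - x1)) (x4 - x1)) (qmul (qinv (x2 - x1)) (x5 - x1))
    \<longleftrightarrow> dim {x2 - x1, x4 - x1, x5 - x1} \<le> 2"
proof -
  have "qcommute (qmul (qinv (x2 - x1)) (x4 - x1)) (qmul (qinv (x2 - x1)) (x5 - x1))
    \<longleftrightarrow> qcommute (qmul (qinv (x4 - x1)) (x2 - x1)) (qmul (qinv (x5 - x1)) (x2 - x1))"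
    by (simp only: qinv_qmul qinv_qinv flip: qcommute_qinv[of "qmul (qinv (x2 - x1)) (x4 - x1)"])
  also have "\<dots> \<longleftrightarrow> dim {x2 - x1, x4 - x1, x5 - x1} \<le> 2"
    using assms by (intro qcommute_ldiv_iff_dim) auto
  finally show ?thesis .
qed

lemma qcommute_cross_ratio_fourth_infinite:
  assumes "distinct [x1, x2, x3, x5]"
  shows "qcommute (qmul (qinv (x2 - x1)) (x2 - x3)) (cross_ratio x1 x2 x3 x5)
    \<longleftrightarrow> dim {x2 - x1, x3 - x1, x5 - x1} \<le> 2"
proof -
  define y2 y5 d where "y2 = x2 - x1" and "y5 = x5 - x1" and "d = x1 - x3"
  have nz: "y2 \<noteq> 0" "y5 \<noteq> 0" "d \<noteq> 0" "y2 + d \<noteq> 0" "y5 + d \<noteq> 0"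
    using assms by (auto simp: y2_def y5_def d_def)
  \<comment> \<open>Conjugation by \<open>y2\<close> turns \<open>Q\<close> and \<open>B\<inverse>\<close> into \<open>1 + d y2\<inverse>\<close> and \<open>1 + d y5\<inverse>\<close>.\<close>
  define Q where "Q = qmul (qinv y2) (y2 + d)"
  define B where "B = qmul (qmul (qmul (qinv y2) y5) (qinv (y5 + d))) y2"
  have Q_nz: "Q \<noteq> 0"
    using nz by (simp add: Q_def qmul_eq_0_iff)
  have cross: "cross_ratio x1 x2 x3 x5 = qmul B Q"
    using nz(1) by (simp add: cross_ratio_def B_def Q_def y2_def y5_def d_def qmul_assoc qmul_qinv_cancel_left)
  have conj_Q: "qmul (qmul y2 Q) (qinv y2) = qone + qmul d (qinv y2)"
    using nz by (simp add: Q_def qmul_qinv_cancel_left qmul_add_qinv_right)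
  have conj_B: "qinv (qmul (qmul y2 B) (qinv y2)) = qone + qmul d (qinv y5)"
    using nz by (simp add: B_def qmul_assoc qmul_qinv_cancel_left qmul_qinv_right qinv_qmul
        qmul_add_qinv_right flip: qmul_assoc[of _ y2 "qinv y2"])
  have "qcommute Q (qmul B Q) \<longleftrightarrow> qcommute Q B"
    using Q_nz by (rule qcommute_qmul_right)
  also have "\<dots> \<longleftrightarrow> qcommute (qmul (qmul y2 Q) (qinv y2)) (qinv (qmul (qmul y2 B) (qinv y2)))"
    using qcommute_conj[OF nz(1)] qcommute_qinv_left qcommute_sym by metis
  also have "\<dots> \<longleftrightarrow> qcommute (qmul d (qinv y2)) (qmul d (qinv y5))"
    by (simp only: conj_Q conj_B qcommute_qone_add)
  also have "\<dots> \<longleftrightarrow> dim {d, y2, y5} \<le> 2"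
    using nz by (intro qcommute_rdiv_iff_dim)
  also have "dim {d, y2, y5} = dim {y2, x3 - x1, y5}"
    using dim_insert_uminus[of "x3 - x1" "{y2, y5}"] by (simp add: d_def insert_commute)
  finally show ?thesis
    by (simp add: cross Q_def y2_def y5_def d_def)
qed

lemma qcommute_cross_ratio_finite:
  assumes "distinct [x1, x2, x3, x4, x5]"
  shows "qcommute (cross_ratio x1 x2 x3 x4) (cross_ratio x1 x2 x3 x5)
    \<longleftrightarrow> aff_dim ((\<lambda>x. inversion (x - x1)) ` {x2, x3, x4, x5}) \<le> 2"
proof -
  define y2 y3 y4 y5 where "y2 = x2 - x1" and "y3 = x3 - x1" and "y4 = x4 - x1" and "y5 = x5 - x1"
  define w2 w3 w4 w5 where "w2 = inversion y2" and "w3 = inversion y3"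
    and "w4 = inversion y4" and "w5 = inversion y5"
  define R where "R y = qmul (qinv (qinv y3 - qinv y)) (qinv y3 - qinv y2)" for y
  have y: "distinct [0, y2, y3, y4, y5]"
    using assms by (auto simp: y2_def y3_def y4_def y5_def)
  have cross: "cross_ratio x1 x2 x3 x = qmul (qmul (qinv y2) (R (x - x1))) (qinv (qinv y2))"
    if "distinct [0, y2, y3, x - x1]" for x
    using cross_ratio_0_eq_conj_qinv[OF that] cross_ratio_translate[of x1 x2 x3 x]
    by (simp add: R_def y2_def y3_def)
  have "qcommute (cross_ratio x1 x2 x3 x4) (cross_ratio x1 x2 x3 x5) \<longleftrightarrow> qcommute (R y4) (R y5)"
    using y qcommute_conj[of "qinv y2" "R y4" "R y5"] by (simp add: cross y4_def y5_def)
  also have "\<dots> \<longleftrightarrow> dim {qinv y3 - qinv y2, qinv y3 - qinv y4, qinv y3 - qinv y5} \<le> 2"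
    unfolding R_def using y by (intro qcommute_ldiv_iff_dim) (auto simp: qinv_inj)
  also have "{qinv y3 - qinv y2, qinv y3 - qinv y4, qinv y3 - qinv y5}
      = (\<lambda>v. - qcnj v) ` {w2 - w3, w4 - w3, w5 - w3}"
    by (simp add: w2_def w3_def w4_def w5_def qinv_eq_qcnj_inversion qcnj_diff)
  also have "dim \<dots> = dim {w2 - w3, w4 - w3, w5 - w3}"
    using linear_qcnj by (intro dim_image_eq linear_compose_neg) (auto intro: inj_onI)
  also have "\<dots> \<le> 2 \<longleftrightarrow> aff_dim (insert w3 {w2, w4, w5}) \<le> 2"
    by (simp add: aff_dim_insert_eq_dim)
  also have "insert w3 {w2, w4, w5} = (\<lambda>x. inversion (x - x1)) ` {x2, x3, x4, x5}"
    by (auto simp: w2_def w3_def w4_def w5_def y2_def y3_def y4_def y5_def)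
  finally show ?thesis .
qed

section \<open>2-spheres and 2-planes\<close>

lemma ex_2plane_superset_iff: "(\<exists>P. is_2plane P \<and> S \<subseteq> P) \<longleftrightarrow> aff_dim S \<le> 2"
proof
  assume "\<exists>P. is_2plane P \<and> S \<subseteq> P"
  then show "aff_dim S \<le> 2"
    unfolding is_2plane_def by (metis aff_dim_subset)
next
  assume "aff_dim S \<le> 2"
  then obtain P where "affine P" "S \<subseteq> P" "aff_dim P = 2"
    using affine_superset_of_aff_dim[of S 2] by auto
  then show "\<exists>P. is_2plane P \<and> S \<subseteq> P"
    unfolding is_2plane_def by blast
qed

lemma is_2sphere_translation: "is_2sphere S \<Longrightarrow> is_2sphere ((+) a ` S)"
  unfolding is_2sphere_def
proof (elim exE conjE)
  fix A c r
  assume A: "affine A" "aff_dim A = 3" "c \<in> A" "r > 0" and S: "S = A \<inter> sphere c r"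
  show "\<exists>A c r. affine A \<and> aff_dim A = 3 \<and> c \<in> A \<and> 0 < r \<and> (+) a ` S = A \<inter> sphere c r"
  proof (intro exI conjI)
    show "affine ((+) a ` A)"
      using A(1) affine_translation by blast
    show "(+) a ` S = (+) a ` A \<inter> sphere (a + c) r"
      by (simp add: S image_Int sphere_translation)
  qed (use A in \<open>simp_all add: aff_dim_translation_eq\<close>)
qed

lemma aff_dim_inversion_image_2sphere_through_0:
  assumes "is_2sphere T" "0 \<in> T"
  shows "aff_dim (inversion ` (T - {0})) \<le> 2"
proof -
  obtain A c r where A: "affine A" "aff_dim A = 3" "c \<in> A" and T: "T = A \<inter> sphere c r"
    using assms(1) unfolding is_2sphere_def by blast
  have "subspace A"
    using A(1) assms(2) T by (simp add: subspace_affine)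
  have "inversion x \<in> A \<inter> {w. c \<bullet> w = 1/2}" if "x \<in> T" "x \<noteq> 0" for x
  proof -
    have "dist c x = norm c"
      using that(1) assms(2) T by simp
    then have "c \<bullet> inversion x = 1/2"
      using inner_inversion_eq_half_iff[OF that(2)] by blast
    moreover have "inversion x \<in> A"
      using that(1) T \<open>subspace A\<close> by (simp add: inversion_def subspace_scale)
    ultimately show ?thesis
      by simp
  qed
  then have "inversion ` (T - {0}) \<subseteq> A \<inter> {w. c \<bullet> w = 1/2}"
    by blast
  then have "aff_dim (inversion ` (T - {0})) \<le> aff_dim (A \<inter> {w. c \<bullet> w = 1/2})"
    by (rule aff_dim_subset)
  also have "\<dots> \<le> 2"
    unfolding aff_dim_affine_Int_hyperplane[OF A(1)] using A(2) assms(2) T by auto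
  finally show ?thesis .
qed

lemma ex_2sphere_through_0_if_inversion_in_2plane:
  fixes S :: "quat set"
  assumes P: "affine P" "aff_dim P = 2" "0 \<notin> P" and S: "inversion ` S \<subseteq> P"
  shows "\<exists>T. is_2sphere T \<and> insert 0 S \<subseteq> T"
proof -
  have "P \<noteq> {}"
    using P(2) by auto
  obtain z where z: "z \<in> P" "\<And>w. w \<in> P \<Longrightarrow> z \<bullet> w = z \<bullet> z"
    using P(1) \<open>P \<noteq> {}\<close> by (rule affine_foot_of_perpendicular) blast
  have "z \<noteq> 0"
    using z(1) P(3) by auto
  \<comment> \<open>Inversion maps the hyperplane \<open>{w. z \<bullet> w = z \<bullet> z} \<supseteq> P\<close> into the sphere through \<open>0\<close>
    with centre \<open>c\<close>.\<close>
  define c where "c = (1 / (2 * (z \<bullet> z))) *\<^sub>R z"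
  have "aff_dim (insert 0 P) = 3"
    unfolding aff_dim_insert hull_same[of affine P, OF P(1)] using P(2,3) by simp
  then have dim_P: "dim P = 3"
    using aff_dim_insert_eq_dim[of 0 P] by simp
  have sphere: "is_2sphere (span P \<inter> sphere c (norm c))"
    unfolding is_2sphere_def
  proof (intro exI conjI)
    show "affine (span P)"
      by (simp add: subspace_imp_affine)
    show "aff_dim (span P) = 3"
      using dim_P by (simp add: aff_dim_subspace)
    show "c \<in> span P"
      using z(1) by (simp add: c_def span_base span_scale)
    show "norm c > 0"
      using \<open>z \<noteq> 0\<close> by (simp add: c_def)
  qed simp
  have "x \<in> span P \<inter> sphere c (norm c)" if "x \<in> S" for x
  proof -
    have "inversion x \<in> P"
      using S that by blast
    then have "x \<noteq> 0"
      using P(3) by auto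
    have "c \<bullet> inversion x = 1/2"
      using z(2)[OF \<open>inversion x \<in> P\<close>] \<open>z \<noteq> 0\<close> by (simp add: c_def)
    then have "dist c x = norm c"
      using inner_inversion_eq_half_iff[OF \<open>x \<noteq> 0\<close>] by blast
    moreover have "x \<in> span P"
      using span_scale[OF span_base[OF \<open>inversion x \<in> P\<close>], of "(norm x)^2"] \<open>x \<noteq> 0\<close>
      by (simp add: inversion_def)
    ultimately show ?thesis
      by simp
  qed
  then have "insert 0 S \<subseteq> span P \<inter> sphere c (norm c)"
    by (auto simp: span_zero)
  with sphere show ?thesis
    by blast
qed

lemma sphere_or_plane_through_0_iff_inversion:
  fixes S :: "quat set"
  assumes "0 \<notin> S"
  shows "(\<exists>T. is_2sphere T \<and> insert 0 S \<subseteq> T) \<or> aff_dim (insert 0 S) \<le> 2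
    \<longleftrightarrow> aff_dim (inversion ` S) \<le> 2"
proof
  assume "(\<exists>T. is_2sphere T \<and> insert 0 S \<subseteq> T) \<or> aff_dim (insert 0 S) \<le> 2"
  then show "aff_dim (inversion ` S) \<le> 2"
  proof
    assume "\<exists>T. is_2sphere T \<and> insert 0 S \<subseteq> T"
    then obtain T where T: "is_2sphere T" "insert 0 S \<subseteq> T"
      by blast
    then have "aff_dim (inversion ` S) \<le> aff_dim (inversion ` (T - {0}))"
      using assms by (intro aff_dim_subset image_mono) auto
    also have "\<dots> \<le> 2"
      using T by (intro aff_dim_inversion_image_2sphere_through_0) auto
    finally show ?thesis .
  next
    assume "aff_dim (insert 0 S) \<le> 2"
    moreover have "aff_dim (inversion ` S) \<le> aff_dim (insert 0 (inversion ` S))"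
      by (intro aff_dim_subset) auto
    ultimately show ?thesis
      by (simp add: aff_dim_insert_0_inversion_image)
  qed
next
  assume "aff_dim (inversion ` S) \<le> 2"
  then obtain P where P: "affine P" "inversion ` S \<subseteq> P" "aff_dim P = 2"
    using affine_superset_of_aff_dim[of "inversion ` S" 2] by auto
  show "(\<exists>T. is_2sphere T \<and> insert 0 S \<subseteq> T) \<or> aff_dim (insert 0 S) \<le> 2"
  proof (cases "0 \<in> P")
    case True
    have "aff_dim (insert 0 S) = aff_dim (insert 0 (inversion ` S))"
      by (simp add: aff_dim_insert_0_inversion_image)
    also have "\<dots> \<le> aff_dim P"
      using True P(2) by (intro aff_dim_subset) auto
    finally show ?thesis
      using P(3) by simp
  next
    case False
    then show ?thesis
      using ex_2sphere_through_0_if_inversion_in_2plane P by blast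
  qed
qed

lemma sphere_or_plane_iff_inversion:
  fixes S :: "quat set"
  assumes "p \<notin> S"
  shows "(\<exists>T. is_2sphere T \<and> insert p S \<subseteq> T) \<or> aff_dim (insert p S) \<le> 2
    \<longleftrightarrow> aff_dim ((\<lambda>x. inversion (x - p)) ` S) \<le> 2"
proof -
  have shift: "(+) a ` (+) b ` X = (+) (a + b) ` X" for a b :: quat and X
    by (simp add: image_image add.assoc)
  have "(\<exists>T. is_2sphere T \<and> insert p S \<subseteq> T)
      \<longleftrightarrow> (\<exists>T. is_2sphere T \<and> (+) (- p) ` insert p S \<subseteq> T)"
  proof
    assume "\<exists>T. is_2sphere T \<and> insert p S \<subseteq> T"
    then show "\<exists>T. is_2sphere T \<and> (+) (- p) ` insert p S \<subseteq> T"
      by (blast intro: is_2sphere_translation)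
  next
    assume "\<exists>T. is_2sphere T \<and> (+) (- p) ` insert p S \<subseteq> T"
    then obtain T where "is_2sphere T" "(+) p ` (+) (- p) ` insert p S \<subseteq> (+) p ` T"
      by blast
    then show "\<exists>T. is_2sphere T \<and> insert p S \<subseteq> T"
      by (metis is_2sphere_translation shift add.right_inverse image_add_0)
  qed
  moreover have "(+) (- p) ` insert p S = insert 0 ((\<lambda>x. x - p) ` S)"
    by auto
  moreover have "aff_dim (insert p S) = aff_dim (insert 0 ((\<lambda>x. x - p) ` S))"
    using aff_dim_translation_eq_subtract[of p "insert p S"] by simp
  moreover have "0 \<notin> (\<lambda>x. x - p) ` S"
    using assms by auto
  ultimately show ?thesis
    using sphere_or_plane_through_0_iff_inversion by (simp add: image_image)
qed

lemma on_2sphere_or_2plane_insert_None: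
  "on_2sphere_or_2plane (insert None (Some ` X)) \<longleftrightarrow> aff_dim X \<le> 2"
  unfolding on_2sphere_or_2plane_def ex_2plane_superset_iff[symmetric] by auto

lemma on_2sphere_or_2plane_Some_iff_inversion:
  assumes "p \<notin> X"
  shows "on_2sphere_or_2plane (Some ` insert p X) \<longleftrightarrow> aff_dim ((\<lambda>x. inversion (x - p)) ` X) \<le> 2"
proof -
  have "on_2sphere_or_2plane (Some ` insert p X)
      \<longleftrightarrow> (\<exists>T. is_2sphere T \<and> insert p X \<subseteq> T) \<or> aff_dim (insert p X) \<le> 2"
    unfolding on_2sphere_or_2plane_def ex_2plane_superset_iff[symmetric] by auto
  also have "\<dots> \<longleftrightarrow> aff_dim ((\<lambda>x. inversion (x - p)) ` X) \<le> 2"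
    using assms by (rule sphere_or_plane_iff_inversion)
  finally show ?thesis .
qed

lemma on_2sphere_or_2plane_iff_qcommute_first_infinite:
  assumes "distinct [x2, x3, x4, x5]"
  shows "on_2sphere_or_2plane {None, Some x2, Some x3, Some x4, Some x5} \<longleftrightarrow>
    qcommute (cross_ratio_ext None (Some x2) (Some x3) (Some x4))
      (cross_ratio_ext None (Some x2) (Some x3) (Some x5))"
proof -
  have "on_2sphere_or_2plane {None, Some x2, Some x3, Some x4, Some x5}
      \<longleftrightarrow> aff_dim (insert x3 {x2, x4, x5}) \<le> 2"
    using on_2sphere_or_2plane_insert_None[of "insert x3 {x2, x4, x5}"] by (simp add: insert_commute)
  also have "\<dots> \<longleftrightarrow> dim {x2 - x3, x4 - x3, x5 - x3} \<le> 2"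
    by (simp add: aff_dim_insert_eq_dim)
  also have "\<dots> \<longleftrightarrow> qcommute (qmul (qinv (x4 - x3)) (x2 - x3)) (qmul (qinv (x5 - x3)) (x2 - x3))"
    using assms by (intro qcommute_ldiv_iff_dim[symmetric]) auto
  finally show ?thesis
    by (simp add: cross_ratio_ext_def)
qed

lemma on_2sphere_or_2plane_iff_qcommute_second_infinite:
  assumes "distinct [x1, x3, x4, x5]"
  shows "on_2sphere_or_2plane {Some x1, None, Some x3, Some x4, Some x5} \<longleftrightarrow>
    qcommute (cross_ratio_ext (Some x1) None (Some x3) (Some x4))
      (cross_ratio_ext (Some x1) None (Some x3) (Some x5))"
proof -
  have "on_2sphere_or_2plane {Some x1, None, Some x3, Some x4, Some x5}
      \<longleftrightarrow> aff_dim (insert x1 {x3, x4, x5}) \<le> 2"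
    using on_2sphere_or_2plane_insert_None[of "insert x1 {x3, x4, x5}"] by (simp add: insert_commute)
  also have "\<dots> \<longleftrightarrow> dim {x3 - x1, x4 - x1, x5 - x1} \<le> 2"
    by (simp add: aff_dim_insert_eq_dim)
  finally show ?thesis
    using qcommute_cross_ratio_second_infinite[OF assms] by (simp add: cross_ratio_ext_def)
qed

lemma on_2sphere_or_2plane_iff_qcommute_third_infinite:
  assumes "distinct [x1, x2, x4, x5]"
  shows "on_2sphere_or_2plane {Some x1, Some x2, None, Some x4, Some x5} \<longleftrightarrow>
    qcommute (cross_ratio_ext (Some x1) (Some x2) None (Some x4))
      (cross_ratio_ext (Some x1) (Some x2) None (Some x5))"
proof -
  have "on_2sphere_or_2plane {Some x1, Some x2, None, Some x4, Some x5}
      \<longleftrightarrow> aff_dim (insert x1 {x2, x4, x5}) \<le> 2"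
    using on_2sphere_or_2plane_insert_None[of "insert x1 {x2, x4, x5}"] by (simp add: insert_commute)
  also have "\<dots> \<longleftrightarrow> dim {x2 - x1, x4 - x1, x5 - x1} \<le> 2"
    by (simp add: aff_dim_insert_eq_dim)
  finally show ?thesis
    using qcommute_cross_ratio_third_infinite[OF assms] by (simp add: cross_ratio_ext_def)
qed

lemma on_2sphere_or_2plane_iff_qcommute_fourth_infinite:
  assumes "distinct [x1, x2, x3, x5]"
  shows "on_2sphere_or_2plane {Some x1, Some x2, Some x3, None, Some x5} \<longleftrightarrow>
    qcommute (cross_ratio_ext (Some x1) (Some x2) (Some x3) None)
      (cross_ratio_ext (Some x1) (Some x2) (Some x3) (Some x5))"
proof -
  have "on_2sphere_or_2plane {Some x1, Some x2, Some x3, None, Some x5}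
      \<longleftrightarrow> aff_dim (insert x1 {x2, x3, x5}) \<le> 2"
    using on_2sphere_or_2plane_insert_None[of "insert x1 {x2, x3, x5}"] by (simp add: insert_commute)
  also have "\<dots> \<longleftrightarrow> dim {x2 - x1, x3 - x1, x5 - x1} \<le> 2"
    by (simp add: aff_dim_insert_eq_dim)
  finally show ?thesis
    using qcommute_cross_ratio_fourth_infinite[OF assms] by (simp add: cross_ratio_ext_def)
qed

lemma on_2sphere_or_2plane_iff_qcommute_fifth_infinite:
  assumes "distinct [x1, x2, x3, x4]"
  shows "on_2sphere_or_2plane {Some x1, Some x2, Some x3, Some x4, None} \<longleftrightarrow>
    qcommute (cross_ratio_ext (Some x1) (Some x2) (Some x3) (Some x4))
      (cross_ratio_ext (Some x1) (Some x2) (Some x3) None)"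
proof -
  have "on_2sphere_or_2plane {Some x1, Some x2, Some x3, Some x4, None}
      \<longleftrightarrow> on_2sphere_or_2plane {Some x1, Some x2, Some x3, None, Some x4}"
    by (simp add: insert_commute)
  then show ?thesis
    using on_2sphere_or_2plane_iff_qcommute_fourth_infinite[OF assms] by (simp add: qcommute_sym cross_ratio_ext_def)
qed

lemma on_2sphere_or_2plane_iff_qcommute_finite:
  assumes "distinct [x1, x2, x3, x4, x5]"
  shows "on_2sphere_or_2plane {Some x1, Some x2, Some x3, Some x4, Some x5} \<longleftrightarrow>
    qcommute (cross_ratio_ext (Some x1) (Some x2) (Some x3) (Some x4))
      (cross_ratio_ext (Some x1) (Some x2) (Some x3) (Some x5))"
  using on_2sphere_or_2plane_Some_iff_inversion[of x1 "{x2, x3, x4, x5}"]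
    qcommute_cross_ratio_finite[OF assms] assms
  by (simp add: cross_ratio_ext_def)

theorem mainTheorem5:
  fixes q1 q2 q3 q4 q5 :: "quat option"
  assumes "distinct [q1, q2, q3, q4, q5]"
  shows "on_2sphere_or_2plane {q1, q2, q3, q4, q5} \<longleftrightarrow>
         qmul (cross_ratio_ext q1 q2 q3 q4) (cross_ratio_ext q1 q2 q3 q5) =
         qmul (cross_ratio_ext q1 q2 q3 q5) (cross_ratio_ext q1 q2 q3 q4)"
proof -
  have "on_2sphere_or_2plane {q1, q2, q3, q4, q5} \<longleftrightarrow>
      qcommute (cross_ratio_ext q1 q2 q3 q4) (cross_ratio_ext q1 q2 q3 q5)"
    using assms
    by (cases q1; cases q2; cases q3; cases q4; cases q5)
      (simp_all add: on_2sphere_or_2plane_iff_qcommute_first_infinite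
        on_2sphere_or_2plane_iff_qcommute_second_infinite
        on_2sphere_or_2plane_iff_qcommute_third_infinite
        on_2sphere_or_2plane_iff_qcommute_fourth_infinite
        on_2sphere_or_2plane_iff_qcommute_fifth_infinite
        on_2sphere_or_2plane_iff_qcommute_finite)
  then show ?thesis
    by (simp add: qcommute_def)
qed

end
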